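(* Let $k\ge3$ and let $\sigma,\tau\in\mathfrak S_{k-2}$ be consecutive patterns with $A_\sigma(z)=A_\tau(z)$. Then $A_{1\text{-}\sigma\text{-}k}(z)=A_{1\text{-}\tau\text{-}k}(z)$, where for $\sigma=\sigma_1\cdots\sigma_{k-2}$, $1\text{-}\sigma\text{-}k$ denotes the generalized pattern $1\text{-}(\sigma_1+1)\cdots(\sigma_{k-2}+1)\text{-}k$. In particular $A_{1\text{-}23\text{-}4}(z)=A_{1\text{-}32\text{-}4}(z)$.
   Context: $\mathfrak S_n$ is the symmetric group on $\{1,\dots,n\}$, permutations in one-line notation. A generalized pattern of length $m$ is a permutation $\sigma_1\cdots\sigma_m\in\mathfrak S_m$ with, between each pair of adjacent entries, either a dash "-" or nothing. A permutation $\pi\in\mathfrak S_n$ contains it if there are indices $i_1<\dots<i_m$ with $i_{j+1}=i_j+1$ whenever there is no dash between $\sigma_j$ and $\sigma_{j+1}$, and with $\pi_{i_a}<\pi_{i_b}$ iff $\sigma_a<\sigma_b$ for all $a,b$; otherwise $\pi$ avoids it. A consecutive pattern has no dashes. $\alpha_n(\sigma)$ is the number of permutations in $\mathfrak S_n$ avoiding $\sigma$ ($\alpha_0=1$) and $A_\sigma(z)=\sum_{n\ge0}\alpha_n(\sigma)z^n/n!$. *)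

theory Defs
  imports "HOL-Computational_Algebra.Formal_Power_Series"
begin

definition perms :: "nat \<Rightarrow> nat list set" where
  "perms n = {p. distinct p \<and> set p = {1..n}}"

text \<open>A generalized pattern: a permutation word sigma of length m together with a
  list d of length m-1; d!j = True means there is a dash between sigma!j and sigma!(j+1)
  (0-based positions), False means the two entries must be adjacent.\<close>
type_synonym gpat = "nat list \<times> bool list"

definition contains :: "nat list \<Rightarrow> gpat \<Rightarrow> bool" where
  "contains p pat = (case pat of (sg, d) \<Rightarrow>
     (\<exists>ix::nat \<Rightarrow> nat.
        (\<forall>j<length sg. ix j < length p) \<and>
        (\<forall>j. j + 1 < length sg \<longrightarrow> ix j < ix (j + 1)) \<and>
        (\<forall>j. j + 1 < length sg \<longrightarrow> \<not> d ! j \<longrightarrow> ix (j + 1) = ix j + 1) \<and>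
        (\<forall>a<length sg. \<forall>b<length sg. (p ! ix a < p ! ix b) = (sg ! a < sg ! b))))"

definition avoids :: "nat list \<Rightarrow> gpat \<Rightarrow> bool" where
  "avoids p pat = (\<not> contains p pat)"

definition alpha :: "gpat \<Rightarrow> nat \<Rightarrow> nat" where
  "alpha pat n = (if n = 0 then 1 else card {p \<in> perms n. avoids p pat})"

definition egf :: "gpat \<Rightarrow> real fps" where
  "egf pat = Abs_fps (\<lambda>n. of_nat (alpha pat n) / fact n)"

definition consec :: "nat list \<Rightarrow> gpat" where
  "consec sg = (sg, replicate (length sg - 1) False)"

definition wrap :: "nat list \<Rightarrow> gpat" where
  "wrap sg = (1 # map Suc sg @ [length sg + 2],
              True # replicate (length sg - 1) False @ [True])"

end

theory Submission
  imports Defs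
begin

(* Call a position of a permutation p a record if it carries a left-to-right minimum or a
   right-to-left maximum, and call the maximal runs of non-record positions the gaps of p.
   An occurrence of 1-sigma-k in p is the same thing as a consecutive occurrence of sigma
   inside one gap: no record can lie inside the middle block of such an occurrence, and
   conversely every gap lies above the last left-to-right minimum before it and below the
   first right-to-left maximum after it.  Permuting the entries inside each gap leaves the
   records, hence the gaps, unchanged.  So if sigma-avoiders and tau-avoiders are equinumerous
   on every set of values, replacing every gap of a 1-sigma-k-avoider by its image under a
   value-preserving injection from sigma-avoiders to tau-avoiders injects the 1-sigma-k-avoiders
   into the 1-tau-k-avoiders, and symmetry gives equality.  For 1-23-4 and 1-32-4 note that
   12 and 21 are exchanged by reversal. *)

section \<open>Order-isomorphic words and pattern occurrences\<close>

definition same_order :: "nat list \<Rightarrow> nat list \<Rightarrow> bool" where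
  "same_order xs ys \<longleftrightarrow> length xs = length ys \<and>
     (\<forall>a<length xs. \<forall>b<length xs. (xs ! a < xs ! b) = (ys ! a < ys ! b))"

definition occurs_at :: "nat list \<Rightarrow> nat list \<Rightarrow> nat \<Rightarrow> bool" where
  "occurs_at p sg i \<longleftrightarrow> i + length sg \<le> length p \<and> same_order (map (nth p) [i..<i + length sg]) sg"

lemma contains_iff_same_order:
  "contains p (sg, d) \<longleftrightarrow> (\<exists>ix. (\<forall>j<length sg. ix j < length p) \<and>
     (\<forall>j. j + 1 < length sg \<longrightarrow> ix j < ix (j + 1)) \<and>
     (\<forall>j. j + 1 < length sg \<longrightarrow> \<not> d ! j \<longrightarrow> ix (j + 1) = ix j + 1) \<and>
     same_order (map (\<lambda>j. p ! ix j) [0..<length sg]) sg)"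
  unfolding contains_def same_order_def by simp

lemma same_order_map_strict_mono:
  assumes "strict_mono_on (set xs) g"
  shows "same_order (map g xs) ys \<longleftrightarrow> same_order xs ys"
  using strict_mono_on_less[OF assms] by (auto simp: same_order_def)

lemma contains_map_strict_mono:
  assumes "strict_mono_on (set p) g"
  shows "contains (map g p) pat \<longleftrightarrow> contains p pat"
proof -
  have "same_order (map (\<lambda>j. map g p ! ix j) [0..<m]) sg \<longleftrightarrow> same_order (map (\<lambda>j. p ! ix j) [0..<m]) sg"
    if "\<forall>j<m. ix j < length p" for ix m sg
  proof -
    have "map (\<lambda>j. map g p ! ix j) [0..<m] = map g (map (\<lambda>j. p ! ix j) [0..<m])"
      using that by simp
    moreover have "strict_mono_on (set (map (\<lambda>j. p ! ix j) [0..<m])) g"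
      using that by (auto intro: monotone_on_subset[OF assms])
    ultimately show ?thesis by (simp only: same_order_map_strict_mono)
  qed
  then show ?thesis
    by (cases pat) (simp add: contains_iff_same_order cong: conj_cong)
qed

lemma contains_consec_iff:
  assumes "sg \<noteq> []"
  shows "contains p (consec sg) \<longleftrightarrow> (\<exists>i. occurs_at p sg i)"
proof
  assume "contains p (consec sg)"
  then obtain ix where bound: "\<forall>j<length sg. ix j < length p"
    and adjacent: "\<forall>j. j + 1 < length sg \<longrightarrow> ix (j + 1) = ix j + 1"
    and order: "same_order (map (\<lambda>j. p ! ix j) [0..<length sg]) sg"
    unfolding consec_def contains_iff_same_order by auto
  have ix: "j < length sg \<Longrightarrow> ix j = ix 0 + j" for j
    by (induction j) (use adjacent in auto)
  have "map (\<lambda>j. p ! ix j) [0..<length sg] = map (nth p) [ix 0..<ix 0 + length sg]"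
    by (rule nth_equalityI) (simp_all add: ix)
  moreover have "ix 0 + length sg \<le> length p"
    using bound ix[of "length sg - 1"] assms by (cases sg) auto
  ultimately show "\<exists>i. occurs_at p sg i"
    using order unfolding occurs_at_def by metis
next
  assume "\<exists>i. occurs_at p sg i"
  then obtain i where "occurs_at p sg i" ..
  moreover have "map (\<lambda>j. p ! (i + j)) [0..<length sg] = map (nth p) [i..<i + length sg]"
    by (rule nth_equalityI) simp_all
  ultimately show "contains p (consec sg)"
    unfolding consec_def contains_iff_same_order occurs_at_def
    by (intro exI[of _ "\<lambda>j. i + j"]) auto
qed

lemma same_order_commute: "same_order xs ys \<longleftrightarrow> same_order ys xs"
  unfolding same_order_def by auto

lemma same_order_Cons:
  "same_order (x # xs) (y # ys) \<longleftrightarrow> same_order xs ys \<and>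
     (\<forall>a<length xs. (x < xs ! a \<longleftrightarrow> y < ys ! a) \<and> (xs ! a < x \<longleftrightarrow> ys ! a < y))"
  unfolding same_order_def by (auto simp: All_less_Suc2)

lemma same_order_snoc:
  "same_order (xs @ [x]) (ys @ [y]) \<longleftrightarrow> same_order xs ys \<and>
     (\<forall>a<length xs. (x < xs ! a \<longleftrightarrow> y < ys ! a) \<and> (xs ! a < x \<longleftrightarrow> ys ! a < y))"
  unfolding same_order_def by (auto simp: All_less_Suc nth_append)

lemma same_order_bracket:
  assumes "length xs = length ys" "ys \<noteq> []" "\<forall>y\<in>set ys. lo' < y \<and> y < hi'"
  shows "same_order (lo # xs @ [hi]) (lo' # ys @ [hi']) \<longleftrightarrow>
    same_order xs ys \<and> (\<forall>x\<in>set xs. lo < x \<and> x < hi)"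
proof -
  have ys: "\<forall>a<length ys. lo' < ys ! a \<and> ys ! a < hi'"
    using assms(3) nth_mem by blast
  have "lo' < hi'"
    using assms(2,3) by (metis list.set_intros(1) neq_Nil_conv order.strict_trans)
  have "same_order (lo # xs @ [hi]) (lo' # ys @ [hi']) \<longleftrightarrow> same_order xs ys \<and>
     (\<forall>a<length xs. (hi < xs ! a \<longleftrightarrow> hi' < ys ! a) \<and> (xs ! a < hi \<longleftrightarrow> ys ! a < hi')) \<and>
     (lo < hi \<longleftrightarrow> lo' < hi') \<and> (hi < lo \<longleftrightarrow> hi' < lo') \<and>
     (\<forall>a<length xs. (lo < xs ! a \<longleftrightarrow> lo' < ys ! a) \<and> (xs ! a < lo \<longleftrightarrow> ys ! a < lo'))"
    using assms(1) by (simp add: same_order_Cons same_order_snoc All_less_Suc nth_append)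
  also have "\<dots> \<longleftrightarrow> same_order xs ys \<and> (\<forall>a<length xs. lo < xs ! a \<and> xs ! a < hi) \<and> lo < hi"
    using ys \<open>lo' < hi'\<close> assms(1) by auto
  also have "\<dots> \<longleftrightarrow> same_order xs ys \<and> (\<forall>x\<in>set xs. lo < x \<and> x < hi)"
    using assms(1,2) by (auto simp: all_set_conv_all_nth)
  finally show ?thesis .
qed

lemma perms_length: "sg \<in> perms m \<Longrightarrow> length sg = m"
  unfolding perms_def using distinct_card by fastforce

lemma map_upt_bracket: "map f [0..<m + 2] = f 0 # map (\<lambda>j. f (Suc j)) [0..<m] @ [f (m + 1)]"
  by (rule nth_equalityI) (auto simp: nth_append nth_Cons')

lemma wrap_dash_iff:
  assumes "m \<ge> 1" "length sg = m" "j < m + 1"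
  shows "snd (wrap sg) ! j \<longleftrightarrow> j = 0 \<or> j = m"
  using assms by (cases j) (auto simp: wrap_def nth_append)

lemma same_order_wrap_iff:
  assumes "sg \<in> perms m" "m \<ge> 1" "length xs = m"
  shows "same_order (lo # xs @ [hi]) (fst (wrap sg)) \<longleftrightarrow>
    same_order xs sg \<and> (\<forall>x\<in>set xs. lo < x \<and> x < hi)"
proof -
  have len: "length sg = m" using perms_length[OF assms(1)] .
  have "\<forall>y\<in>set (map Suc sg). 1 < y \<and> y < m + 2" "map Suc sg \<noteq> []"
    using assms(1,2) len unfolding perms_def by auto
  then show ?thesis
    using same_order_bracket[of xs "map Suc sg" 1 "m + 2" lo hi] assms(3) len
      same_order_map_strict_mono[of sg Suc xs]
    by (simp add: wrap_def same_order_commute[of xs] strict_mono_on_def)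
qed

lemma contains_wrap_iff:
  assumes sg: "sg \<in> perms m" and "m \<ge> 1"
  shows "contains p (wrap sg) \<longleftrightarrow> (\<exists>a i b. a < i \<and> i + m \<le> b \<and> b < length p \<and>
    occurs_at p sg i \<and> (\<forall>x\<in>{i..<i + m}. p ! a < p ! x \<and> p ! x < p ! b))"
    (is "_ \<longleftrightarrow> (\<exists>a i b. ?occ a i b)")
proof -
  have len: "length sg = m" using perms_length[OF sg] .
  obtain W D where wrap: "wrap sg = (W, D)" by (cases "wrap sg")
  have lenW: "length W = m + 2" using wrap len by (auto simp: wrap_def)
  note D = wrap_dash_iff[OF assms(2) len, unfolded wrap snd_conv]
  note W = same_order_wrap_iff[OF assms, unfolded wrap fst_conv]
  show ?thesis
  proof
    assume "contains p (wrap sg)"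
    then obtain ix where bound: "\<forall>j<m + 2. ix j < length p"
      and incr: "\<forall>j. j + 1 < m + 2 \<longrightarrow> ix j < ix (j + 1)"
      and adj: "\<forall>j. j + 1 < m + 2 \<longrightarrow> \<not> D ! j \<longrightarrow> ix (j + 1) = ix j + 1"
      and order: "same_order (map (\<lambda>j. p ! ix j) [0..<m + 2]) W"
      unfolding wrap contains_iff_same_order lenW by blast
    define i where "i = ix 1"
    have ix: "j < m \<Longrightarrow> ix (Suc j) = i + j" for j
      by (induction j) (use adj D i_def in auto)
    have "map (\<lambda>j. p ! ix (Suc j)) [0..<m] = map (nth p) [i..<i + m]"
      by (rule nth_equalityI) (simp_all add: ix)
    then have "occurs_at p sg i \<and> (\<forall>x\<in>{i..<i + m}. p ! ix 0 < p ! x \<and> p ! x < p ! ix (m + 1))"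
      using order bound[rule_format, of m] ix[of "m - 1"] assms(2)
      unfolding map_upt_bracket by (simp add: W occurs_at_def len)
    moreover have "ix 0 < i" "i + m \<le> ix (m + 1)" "ix (m + 1) < length p"
      using incr[rule_format, of 0] incr[rule_format, of m] ix[of "m - 1"] bound assms(2) i_def
      by auto
    ultimately show "\<exists>a i b. ?occ a i b" by blast
  next
    assume "\<exists>a i b. ?occ a i b"
    then obtain a i b where occ: "?occ a i b" by blast
    define ix where "ix j = (if j = 0 then a else if j \<le> m then i + (j - 1) else b)" for j
    have "map (\<lambda>j. p ! ix (Suc j)) [0..<m] = map (nth p) [i..<i + m]"
      by (rule nth_equalityI) (simp_all add: ix_def)
    then have "map (\<lambda>j. p ! ix j) [0..<m + 2] = p ! a # map (nth p) [i..<i + m] @ [p ! b]"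
      unfolding map_upt_bracket by (simp add: ix_def)
    moreover have "same_order (p ! a # map (nth p) [i..<i + m] @ [p ! b]) W"
      using occ by (simp add: W occurs_at_def len)
    ultimately have "same_order (map (\<lambda>j. p ! ix j) [0..<m + 2]) W" by (simp only:)
    moreover have "\<forall>j<m + 2. ix j < length p" "\<forall>j. j + 1 < m + 2 \<longrightarrow> ix j < ix (j + 1)"
      "\<forall>j. j + 1 < m + 2 \<longrightarrow> \<not> D ! j \<longrightarrow> ix (j + 1) = ix j + 1"
      using occ D by (auto simp: ix_def)
    ultimately show "contains p (wrap sg)"
      unfolding wrap contains_iff_same_order lenW by blast
  qed
qed

section \<open>Records and gaps\<close>

definition records :: "nat list \<Rightarrow> nat set" where
  "records p = {i. i < length p \<and>
     ((\<forall>j<i. p ! i < p ! j) \<or> (\<forall>j. i < j \<and> j < length p \<longrightarrow> p ! j < p ! i))}"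

(* Only meaningful for i \<notin> R with elements of R on both sides of i;
   otherwise Max or Min of an empty set is taken. *)
definition gap_start :: "nat set \<Rightarrow> nat \<Rightarrow> nat" where
  "gap_start R i = Suc (Max {j \<in> R. j < i})"

definition gap_end :: "nat set \<Rightarrow> nat \<Rightarrow> nat" where
  "gap_end R i = Min {j \<in> R. i < j}"

lemma less_gap_start: "finite R \<Longrightarrow> j \<in> R \<Longrightarrow> j < i \<Longrightarrow> j < gap_start R i"
  unfolding gap_start_def by (simp add: le_imp_less_Suc)

lemma gap_end_le: "finite R \<Longrightarrow> j \<in> R \<Longrightarrow> i < j \<Longrightarrow> gap_end R i \<le> j"
  unfolding gap_end_def by simp

lemma gap_start_le: "finite R \<Longrightarrow> \<exists>j\<in>R. j < i \<Longrightarrow> gap_start R i \<le> i"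
  unfolding gap_start_def by (subst Suc_le_eq, subst Max_less_iff) auto

lemma gap_end_mem:
  assumes "finite R" "\<exists>j\<in>R. i < j"
  shows "gap_end R i \<in> R \<and> i < gap_end R i"
proof -
  have "Min {j \<in> R. i < j} \<in> {j \<in> R. i < j}"
    using assms by (intro Min_in) auto
  then show ?thesis unfolding gap_end_def by simp
qed

lemma mem_gap_eq:
  "finite R \<Longrightarrow> x \<in> R \<Longrightarrow> gap_start R i \<le> x \<Longrightarrow> x < gap_end R i \<Longrightarrow> x = i"
  using less_gap_start[of R x i] gap_end_le[of R x i] by (cases x i rule: linorder_cases) auto

lemma gap_cong:
  assumes "finite R" "i \<notin> R" "gap_start R i \<le> x" "x < gap_end R i"
  shows "gap_start R x = gap_start R i" "gap_end R x = gap_end R i"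
proof -
  have "j < x \<longleftrightarrow> j < i" "x < j \<longleftrightarrow> i < j" if "j \<in> R" for j
    using that assms mem_gap_eq[of R j i] less_gap_start[of R j i] gap_end_le[of R j i]
    by (metis le_less_trans not_less_iff_gr_or_eq order.strict_trans2)+
  then have "{j \<in> R. j < x} = {j \<in> R. j < i}" "{j \<in> R. x < j} = {j \<in> R. i < j}"
    by blast+
  then show "gap_start R x = gap_start R i" "gap_end R x = gap_end R i"
    unfolding gap_start_def gap_end_def by simp_all
qed

lemma records_subset: "records p \<subseteq> {..<length p}"
  unfolding records_def by auto

lemma finite_records: "finite (records p)"
  using finite_subset[OF records_subset] by blast

lemma first_last_in_records: "p \<noteq> [] \<Longrightarrow> 0 \<in> records p \<and> length p - 1 \<in> records p"
  unfolding records_def by auto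

lemma gap_bounds:
  assumes "i < length p" "i \<notin> records p"
  shows "gap_start (records p) i \<le> i" "i < gap_end (records p) i"
    "gap_end (records p) i \<in> records p" "gap_end (records p) i < length p"
proof -
  have "p \<noteq> []" using assms(1) by auto
  then have first: "0 \<in> records p" and last: "length p - 1 \<in> records p"
    using first_last_in_records by blast+
  then have "i \<noteq> 0" "i \<noteq> length p - 1"
    using assms(2) by metis+
  then have "0 < i" "i < length p - 1"
    using assms(1) by auto
  then have "\<exists>j\<in>records p. j < i" "\<exists>j\<in>records p. i < j"
    using first last by blast+
  then show "gap_start (records p) i \<le> i" "i < gap_end (records p) i"
    "gap_end (records p) i \<in> records p"
    using gap_start_le[OF finite_records] gap_end_mem[OF finite_records] by blast+
  then show "gap_end (records p) i < length p"
    using records_subset by blast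
qed

definition gap :: "nat list \<Rightarrow> nat \<Rightarrow> nat list" where
  "gap p i = map (nth p) [gap_start (records p) i..<gap_end (records p) i]"

lemma gap_cong_records:
  assumes "i < length p" "i \<notin> records p"
    and "gap_start (records p) i \<le> x" "x < gap_end (records p) i"
  shows "x \<notin> records p" "gap_start (records p) x = gap_start (records p) i" "gap p x = gap p i"
  using mem_gap_eq[OF finite_records, of x p i] gap_cong[OF finite_records assms(2-4)] assms(2-4)
  unfolding gap_def by auto

lemma nth_gap:
  assumes "i < length p" "i \<notin> records p"
  shows "gap p i ! (i - gap_start (records p) i) = p ! i"
  using gap_bounds(1,2)[OF assms] unfolding gap_def by simp

lemma gap_not_Nil: "i < length p \<Longrightarrow> i \<notin> records p \<Longrightarrow> gap p i \<noteq> []"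
  using gap_bounds(1,2)[of i p] unfolding gap_def by auto

lemma distinct_gap: "distinct p \<Longrightarrow> i < length p \<Longrightarrow> i \<notin> records p \<Longrightarrow> distinct (gap p i)"
  using gap_bounds(4)[of i p] unfolding gap_def by (auto simp: distinct_map inj_on_def nth_eq_iff_index_eq)

lemma ex_record_min_prefix:
  assumes "distinct p" "0 < k" "k \<le> length p"
  shows "\<exists>t<k. t \<in> records p \<and> (\<forall>j<k. p ! t \<le> p ! j)"
proof -
  obtain t where t: "t < k" "p ! t = Min (nth p ` {..<k})"
    using Min_in[of "nth p ` {..<k}"] assms(2) by fastforce
  then have min: "\<forall>j<k. p ! t \<le> p ! j" by simp
  have "p ! t < p ! j" if "j < t" for j
  proof -
    have "p ! t \<noteq> p ! j"
      using that t(1) assms(3) by (simp add: nth_eq_iff_index_eq[OF assms(1)])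
    with min that t(1) show ?thesis by (simp add: order_less_le)
  qed
  then have "t \<in> records p" using t(1) assms(3) unfolding records_def by auto
  with t(1) min show ?thesis by blast
qed

lemma ex_record_max_suffix:
  assumes "distinct p" "k < length p"
  shows "\<exists>u. k \<le> u \<and> u \<in> records p \<and> (\<forall>j. k \<le> j \<and> j < length p \<longrightarrow> p ! j \<le> p ! u)"
proof -
  obtain u where u: "k \<le> u" "u < length p" "p ! u = Max (nth p ` {k..<length p})"
    using Max_in[of "nth p ` {k..<length p}"] assms(2) by fastforce
  then have max: "\<forall>j. k \<le> j \<and> j < length p \<longrightarrow> p ! j \<le> p ! u" by simp
  have "p ! j < p ! u" if "u < j" "j < length p" for j
  proof -
    have "p ! j \<noteq> p ! u"
      using that u(2) by (simp add: nth_eq_iff_index_eq[OF assms(1)])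
    with max that u(1) show ?thesis by (simp add: order_less_le)
  qed
  then have "u \<in> records p" using u(2) unfolding records_def by auto
  with u(1) max show ?thesis by blast
qed

lemma gap_above_record:
  assumes "distinct p" "i < length p" "i \<notin> records p"
  defines "s \<equiv> gap_start (records p) i" and "e \<equiv> gap_end (records p) i"
  shows "\<exists>t\<in>records p. t < s \<and> (\<forall>x\<in>{s..<e}. p ! t < p ! x)"
proof -
  have "s \<le> i" "e < length p"
    using gap_bounds[OF assms(2,3)] unfolding s_def e_def by auto
  have "0 < s" unfolding s_def gap_start_def by simp
  moreover have "s \<le> length p" using \<open>s \<le> i\<close> assms(2) by simp
  ultimately obtain t where t: "t < s" "t \<in> records p" "\<forall>j<s. p ! t \<le> p ! j"
    using ex_record_min_prefix[OF assms(1)] by blast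
  have "p ! t < p ! x" if x: "s \<le> x" "x < e" for x
  proof (rule ccontr)
    assume "\<not> p ! t < p ! x"
    have "Suc x \<le> length p" using x \<open>e < length p\<close> by simp
    then obtain t' where t': "t' < Suc x" "t' \<in> records p" "\<forall>j<Suc x. p ! t' \<le> p ! j"
      using ex_record_min_prefix[OF assms(1) zero_less_Suc] by blast
    have "t' < s"
    proof (rule ccontr)
      assume "\<not> t' < s"
      then have "t' = i"
        using mem_gap_eq[OF finite_records t'(2), of i] t'(1) x unfolding s_def e_def by simp
      with t'(2) assms(3) show False by simp
    qed
    then have "p ! t \<le> p ! t'" "p ! t' \<le> p ! x"
      using t(3) t'(3) by simp_all
    then have "p ! t = p ! x"
      using \<open>\<not> p ! t < p ! x\<close> by linarith
    then have "t = x"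
      using t(1) x \<open>e < length p\<close> \<open>s \<le> i\<close> assms(2) by (simp add: nth_eq_iff_index_eq[OF assms(1)])
    with t(1) x(1) show False by simp
  qed
  with t show ?thesis by (intro bexI[of _ t]) auto
qed

lemma gap_below_record:
  assumes "distinct p" "i < length p" "i \<notin> records p"
  defines "s \<equiv> gap_start (records p) i" and "e \<equiv> gap_end (records p) i"
  shows "\<exists>u\<in>records p. e \<le> u \<and> (\<forall>x\<in>{s..<e}. p ! x < p ! u)"
proof -
  have "e < length p" using gap_bounds[OF assms(2,3)] unfolding e_def by auto
  then obtain u where u: "e \<le> u" "u \<in> records p" "\<forall>j. e \<le> j \<and> j < length p \<longrightarrow> p ! j \<le> p ! u"
    using ex_record_max_suffix[OF assms(1)] by blast
  have "p ! x < p ! u" if x: "s \<le> x" "x < e" for x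
  proof (rule ccontr)
    assume "\<not> p ! x < p ! u"
    have "x < length p" using x \<open>e < length p\<close> by simp
    then obtain u' where u': "x \<le> u'" "u' \<in> records p" "\<forall>j. x \<le> j \<and> j < length p \<longrightarrow> p ! j \<le> p ! u'"
      using ex_record_max_suffix[OF assms(1)] by blast
    have "e \<le> u'"
    proof (rule ccontr)
      assume "\<not> e \<le> u'"
      then have "u' = i"
        using mem_gap_eq[OF finite_records u'(2), of i] u'(1) x unfolding s_def e_def by simp
      with u'(2) assms(3) show False by simp
    qed
    moreover have "u' < length p" using u'(2) records_subset by blast
    ultimately have "p ! x \<le> p ! u'" "p ! u' \<le> p ! u"
      using u(3) u'(3) \<open>x < length p\<close> by simp_all
    then have "p ! x = p ! u"
      using \<open>\<not> p ! x < p ! u\<close> by linarith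
    moreover have "u < length p" using u(2) records_subset by blast
    ultimately have "x = u"
      using \<open>x < length p\<close> by (simp add: nth_eq_iff_index_eq[OF assms(1)])
    with u(1) x(2) show False by simp
  qed
  with u show ?thesis by (intro bexI[of _ u]) auto
qed

lemma occurs_at_slice:
  assumes "s \<le> i" "i + length sg \<le> e" "e \<le> length p"
  shows "occurs_at (map (nth p) [s..<e]) sg (i - s) \<longleftrightarrow> occurs_at p sg i"
proof -
  have "map (nth (map (nth p) [s..<e])) [i - s..<i - s + length sg] = map (nth p) [i..<i + length sg]"
    using assms by (intro nth_equalityI) simp_all
  then show ?thesis using assms unfolding occurs_at_def by auto
qed

lemma not_record_between:
  assumes "a < x" "x < b" "b < length p" "p ! a < p ! x" "p ! x < p ! b"
  shows "x \<notin> records p"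
  using assms unfolding records_def by auto

lemma contains_wrap_iff_gap:
  assumes "distinct p" "sg \<in> perms m" "m \<ge> 1"
  shows "contains p (wrap sg) \<longleftrightarrow> (\<exists>i<length p. i \<notin> records p \<and> contains (gap p i) (consec sg))"
proof -
  have len: "length sg = m" using perms_length[OF assms(2)] .
  have consec: "contains xs (consec sg) \<longleftrightarrow> (\<exists>k. occurs_at xs sg k)" for xs
    using contains_consec_iff[of sg xs] len assms(3) by fastforce
  show ?thesis
  proof
    assume "contains p (wrap sg)"
    then obtain a i b where occ: "a < i" "i + m \<le> b" "b < length p" "occurs_at p sg i"
      and between: "\<forall>x\<in>{i..<i + m}. p ! a < p ! x \<and> p ! x < p ! b"
      using contains_wrap_iff[OF assms(2,3)] by blast
    have no_record: "x \<notin> records p" if "i \<le> x" "x < i + m" for x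
      using not_record_between[of a x b p] occ between that by auto
    then have i: "i < length p" "i \<notin> records p" using occ assms(3) by auto
    have "gap_end (records p) i \<ge> i + m"
      using gap_bounds(2,3)[OF i] no_record by (meson not_le less_imp_le)
    then have "occurs_at (gap p i) sg (i - gap_start (records p) i)"
      unfolding gap_def using occurs_at_slice gap_bounds(1,4)[OF i] occ(4) len by simp
    then show "\<exists>i<length p. i \<notin> records p \<and> contains (gap p i) (consec sg)"
      using i consec by blast
  next
    assume "\<exists>i<length p. i \<notin> records p \<and> contains (gap p i) (consec sg)"
    then obtain i k where i: "i < length p" "i \<notin> records p" and "occurs_at (gap p i) sg k"
      using consec by blast
    define s where "s = gap_start (records p) i"
    define e where "e = gap_end (records p) i"
    have "k + m \<le> e - s" "s < e" "e < length p"
      using \<open>occurs_at (gap p i) sg k\<close> gap_bounds[OF i] len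
      unfolding occurs_at_def gap_def s_def e_def by simp_all
    then have "occurs_at p sg (s + k)"
      using occurs_at_slice[of s "s + k" sg e p] \<open>occurs_at (gap p i) sg k\<close> len
      unfolding gap_def s_def e_def by auto
    moreover obtain t where "t < s" "\<forall>x\<in>{s..<e}. p ! t < p ! x"
      using gap_above_record[OF assms(1) i] unfolding s_def e_def by blast
    moreover obtain u where "u \<in> records p" "e \<le> u" "\<forall>x\<in>{s..<e}. p ! x < p ! u"
      using gap_below_record[OF assms(1) i] unfolding s_def e_def by blast
    moreover have "u < length p" using records_subset \<open>u \<in> records p\<close> by blast
    ultimately show "contains p (wrap sg)"
      unfolding contains_wrap_iff[OF assms(2,3)] using \<open>k + m \<le> e - s\<close> \<open>s < e\<close>
      by (intro exI[of _ t] exI[of _ "s + k"] exI[of _ u]) auto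
  qed
qed

section \<open>Rearranging the entries of the gaps\<close>

definition block :: "nat set \<Rightarrow> nat \<Rightarrow> nat set" where
  "block R i = (if i \<in> R then {i} else {gap_start R i..<gap_end R i})"

lemma block_eq:
  assumes "finite R" "x \<in> block R i"
  shows "block R x = block R i"
proof (cases "i \<in> R")
  case True
  then show ?thesis using assms(2) unfolding block_def by simp
next
  case False
  then have x: "gap_start R i \<le> x" "x < gap_end R i" using assms(2) unfolding block_def by auto
  then have "x \<notin> R" using mem_gap_eq[OF assms(1)] False by blast
  then show ?thesis using gap_cong[OF assms(1) False x] False unfolding block_def by simp
qed

lemma block_before:
  assumes "finite R" "i \<in> R" "j < i" "a \<in> block R j"
  shows "a < i"
proof (cases "j \<in> R")
  case True
  then show ?thesis using assms(3,4) unfolding block_def by simp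
next
  case False
  then have "a < gap_end R j" using assms(4) unfolding block_def by simp
  then show ?thesis using gap_end_le[OF assms(1,2,3)] by simp
qed

lemma block_after:
  assumes "finite R" "i \<in> R" "i < j" "a \<in> block R j"
  shows "i < a"
proof (cases "j \<in> R")
  case True
  then show ?thesis using assms(3,4) unfolding block_def by simp
next
  case False
  then have "gap_start R j \<le> a" using assms(4) unfolding block_def by simp
  then show ?thesis using less_gap_start[OF assms(1,2,3)] by simp
qed

lemma block_records_bounds:
  assumes "i < length p"
  shows "i \<in> block (records p) i" "block (records p) i \<subseteq> {..<length p}"
  using assms gap_bounds[of i p] unfolding block_def by auto

locale gap_rearrangement =
  fixes p q :: "nat list"
  assumes distinct_p: "distinct p"
    and length_eq: "length q = length p"
    and on_records: "\<And>i. i \<in> records p \<Longrightarrow> q ! i = p ! i"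
    and on_gaps: "\<And>i. i < length p \<Longrightarrow> i \<notin> records p \<Longrightarrow>
      distinct (map (nth q) [gap_start (records p) i..<gap_end (records p) i]) \<and>
      set (map (nth q) [gap_start (records p) i..<gap_end (records p) i]) = set (gap p i)"
begin

lemma nth_from_block:
  assumes "i < length p"
  shows "\<exists>a\<in>block (records p) i. q ! i = p ! a"
proof (cases "i \<in> records p")
  case True
  then show ?thesis using on_records unfolding block_def by simp
next
  case False
  let ?s = "gap_start (records p) i" and ?e = "gap_end (records p) i"
  have "?s \<le> i" "i < ?e" using gap_bounds[OF assms False] by auto
  then have "q ! i \<in> set (map (nth q) [?s..<?e])"
    by (metis atLeastLessThan_iff image_eqI list.set_map set_upt nth_mem)
  then show ?thesis
    using on_gaps[OF assms False] False unfolding gap_def block_def by auto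
qed

lemma distinct_rearrangement: "distinct q"
  unfolding distinct_conv_nth
proof (intro allI impI)
  fix i j assume ij: "i < length q" "j < length q" "i \<noteq> j"
  then have i: "i < length p" and j: "j < length p" using length_eq by auto
  show "q ! i \<noteq> q ! j"
  proof
    assume eq: "q ! i = q ! j"
    obtain a b where a: "a \<in> block (records p) i" "q ! i = p ! a"
      and b: "b \<in> block (records p) j" "q ! j = p ! b"
      using nth_from_block[OF i] nth_from_block[OF j] by blast
    have "a < length p" "b < length p" using a b block_records_bounds i j by blast+
    then have "a = b" using a b eq nth_eq_iff_index_eq[OF distinct_p] by simp
    then have same: "block (records p) j = block (records p) i"
      using block_eq[OF finite_records] a(1) b(1) by metis
    show False
    proof (cases "i \<in> records p")
      case True
      then show ?thesis using same block_records_bounds(1)[OF j] ij(3) unfolding block_def by auto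
    next
      case False
      let ?s = "gap_start (records p) i" and ?e = "gap_end (records p) i"
      have "?s \<le> j" "j < ?e" using same block_records_bounds(1)[OF j] False unfolding block_def by auto
      moreover have "?s \<le> i" "i < ?e" using gap_bounds[OF i False] by auto
      moreover have "inj_on (nth q) {?s..<?e}"
        using on_gaps[OF i False] by (simp add: distinct_map)
      ultimately show False using eq ij(3) by (meson atLeastLessThan_iff inj_onD)
    qed
  qed
qed

lemma set_rearrangement: "set q = set p"
proof -
  have "set q \<subseteq> set p"
  proof
    fix v assume "v \<in> set q"
    then obtain i where i: "i < length p" "v = q ! i" using length_eq by (auto simp: in_set_conv_nth)
    then obtain a where "a \<in> block (records p) i" "v = p ! a" using nth_from_block by blast
    then show "v \<in> set p" using block_records_bounds(2)[OF i(1)] by auto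
  qed
  moreover have "card (set q) = card (set p)"
    using distinct_rearrangement distinct_p length_eq by (simp add: distinct_card)
  ultimately show ?thesis by (simp add: card_subset_eq)
qed

lemma record_kept:
  assumes "i \<in> records p"
  shows "i \<in> records q"
proof -
  have i: "i < length p" and qi: "q ! i = p ! i"
    using assms records_subset on_records by auto
  have "(\<forall>j<i. p ! i < p ! j) \<or> (\<forall>j. i < j \<and> j < length p \<longrightarrow> p ! j < p ! i)"
    using assms unfolding records_def by blast
  then have "(\<forall>j<i. q ! i < q ! j) \<or> (\<forall>j. i < j \<and> j < length p \<longrightarrow> q ! j < q ! i)"
  proof (elim disjE)
    assume min: "\<forall>j<i. p ! i < p ! j"
    have "q ! i < q ! j" if ji: "j < i" for j
    proof -
      obtain a where "a \<in> block (records p) j" "q ! j = p ! a"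
        using nth_from_block[of j] ji i by fastforce
      moreover from this have "a < i" using block_before[OF finite_records assms ji] by blast
      ultimately show ?thesis using min qi by simp
    qed
    then show ?thesis by blast
  next
    assume max: "\<forall>j. i < j \<and> j < length p \<longrightarrow> p ! j < p ! i"
    have "q ! j < q ! i" if ij: "i < j" "j < length p" for j
    proof -
      obtain a where a: "a \<in> block (records p) j" "q ! j = p ! a"
        using nth_from_block[OF ij(2)] by blast
      moreover have "i < a" using block_after[OF finite_records assms ij(1) a(1)] .
      moreover have "a < length p" using block_records_bounds(2)[OF ij(2)] a(1) by auto
      ultimately show ?thesis using max qi by simp
    qed
    then show ?thesis by blast
  qed
  then show ?thesis using i length_eq unfolding records_def by simp
qed

lemma nonrecord_kept:
  assumes "i < length p" "i \<notin> records p"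
  shows "i \<notin> records q"
proof -
  let ?s = "gap_start (records p) i" and ?e = "gap_end (records p) i"
  obtain a where a: "a \<in> {?s..<?e}" "q ! i = p ! a"
    using nth_from_block[OF assms(1)] assms(2) unfolding block_def by auto
  obtain t where t: "t \<in> records p" "t < ?s" "p ! t < p ! a"
    using gap_above_record[OF distinct_p assms] a(1) by blast
  obtain u where u: "u \<in> records p" "?e \<le> u" "p ! a < p ! u"
    using gap_below_record[OF distinct_p assms] a(1) by blast
  have "t < i" "i < u" "u < length q"
    using t(2) u(2,1) gap_bounds[OF assms] records_subset length_eq by auto
  moreover have "q ! t < q ! i" "q ! i < q ! u"
    using t u a(2) on_records by simp_all
  ultimately show ?thesis unfolding records_def by auto
qed

lemma records_rearrangement: "records q = records p"
proof (intro set_eqI iffI)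
  fix i assume "i \<in> records q"
  moreover from this have "i < length p" using records_subset length_eq by fastforce
  ultimately show "i \<in> records p" using nonrecord_kept by blast
qed (rule record_kept)

end

definition consec_avoiders :: "nat list \<Rightarrow> nat list set" where
  "consec_avoiders sg = {xs. xs \<noteq> [] \<and> distinct xs \<and> \<not> contains xs (consec sg)}"

lemma gap_in_consec_avoiders:
  assumes "distinct p" "sg \<in> perms m" "m \<ge> 1" "\<not> contains p (wrap sg)"
    and "i < length p" "i \<notin> records p"
  shows "gap p i \<in> consec_avoiders sg"
  using assms contains_wrap_iff_gap[OF assms(1-3)] gap_not_Nil distinct_gap
  unfolding consec_avoiders_def by blast

definition replace_gaps :: "(nat list \<Rightarrow> nat list) \<Rightarrow> nat list \<Rightarrow> nat list" where
  "replace_gaps f p = map (\<lambda>i. if i \<in> records p then p ! i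
     else f (gap p i) ! (i - gap_start (records p) i)) [0..<length p]"

lemma nth_replace_gaps_record: "i \<in> records p \<Longrightarrow> replace_gaps f p ! i = p ! i"
  using records_subset unfolding replace_gaps_def by fastforce

lemma slice_replace_gaps:
  assumes "i < length p" "i \<notin> records p" "length (f (gap p i)) = length (gap p i)"
  shows "map (nth (replace_gaps f p)) [gap_start (records p) i..<gap_end (records p) i] = f (gap p i)"
proof (rule nth_equalityI)
  let ?s = "gap_start (records p) i" and ?e = "gap_end (records p) i"
  show "length (map (nth (replace_gaps f p)) [?s..<?e]) = length (f (gap p i))"
    using assms(3) unfolding gap_def by simp
  fix x assume "x < length (map (nth (replace_gaps f p)) [?s..<?e])"
  then have x: "?s \<le> ?s + x" "?s + x < ?e" by auto
  moreover have "?e < length p" using gap_bounds(4)[OF assms(1,2)] .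
  ultimately show "map (nth (replace_gaps f p)) [?s..<?e] ! x = f (gap p i) ! x"
    using gap_cong_records[OF assms(1,2) x] unfolding replace_gaps_def by simp
qed

lemma replace_gaps_wrap_avoider:
  assumes sg: "sg \<in> perms m" and tg: "tg \<in> perms m" and "m \<ge> 1"
    and f: "\<forall>xs\<in>consec_avoiders sg. f xs \<in> consec_avoiders tg \<and> set (f xs) = set xs"
    and p: "p \<in> perms n" "avoids p (wrap sg)"
  shows "replace_gaps f p \<in> perms n" "avoids (replace_gaps f p) (wrap tg)"
    "records (replace_gaps f p) = records p"
    "\<And>i. i < length p \<Longrightarrow> i \<notin> records p \<Longrightarrow> gap (replace_gaps f p) i = f (gap p i)"
proof -
  let ?q = "replace_gaps f p"
  have "distinct p" using p(1) unfolding perms_def by simp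
  have f_gap: "f (gap p i) \<in> consec_avoiders tg" "set (f (gap p i)) = set (gap p i)"
    "length (f (gap p i)) = length (gap p i)"
    if "i < length p" "i \<notin> records p" for i
  proof -
    have "gap p i \<in> consec_avoiders sg"
      using gap_in_consec_avoiders[OF \<open>distinct p\<close> sg \<open>m \<ge> 1\<close> _ that] p(2)
      unfolding avoids_def by blast
    then show "f (gap p i) \<in> consec_avoiders tg" "set (f (gap p i)) = set (gap p i)"
      using f by blast+
    then show "length (f (gap p i)) = length (gap p i)"
      using \<open>gap p i \<in> consec_avoiders sg\<close> distinct_card
      unfolding consec_avoiders_def by (metis mem_Collect_eq)
  qed
  interpret gap_rearrangement p ?q
  proof
    show "length ?q = length p" unfolding replace_gaps_def by simp
    show "?q ! i = p ! i" if "i \<in> records p" for i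
      using that by (rule nth_replace_gaps_record)
    show "distinct (map (nth ?q) [gap_start (records p) i..<gap_end (records p) i]) \<and>
      set (map (nth ?q) [gap_start (records p) i..<gap_end (records p) i]) = set (gap p i)"
      if "i < length p" "i \<notin> records p" for i
      using slice_replace_gaps[where f = f, OF that f_gap(3)[OF that]] f_gap(1,2)[OF that]
      unfolding consec_avoiders_def by simp
  qed (fact \<open>distinct p\<close>)
  show "records ?q = records p" by (rule records_rearrangement)
  show "?q \<in> perms n"
    using distinct_rearrangement set_rearrangement p(1) unfolding perms_def by simp
  show gaps: "gap ?q i = f (gap p i)" if "i < length p" "i \<notin> records p" for i
    using slice_replace_gaps[where f = f, OF that f_gap(3)[OF that]] records_rearrangement
    unfolding gap_def by simp
  have "\<not> contains ?q (wrap tg)"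
    unfolding contains_wrap_iff_gap[OF distinct_rearrangement tg \<open>m \<ge> 1\<close>]
    using f_gap(1) gaps length_eq records_rearrangement unfolding consec_avoiders_def by auto
  then show "avoids ?q (wrap tg)" unfolding avoids_def .
qed

lemma inj_on_replace_gaps:
  assumes sg: "sg \<in> perms m" and tg: "tg \<in> perms m" and "m \<ge> 1"
    and f: "\<forall>xs\<in>consec_avoiders sg. f xs \<in> consec_avoiders tg \<and> set (f xs) = set xs"
    and inj: "inj_on f (consec_avoiders sg)"
  shows "inj_on (replace_gaps f) {p \<in> perms n. avoids p (wrap sg)}"
proof (rule inj_onI)
  fix p1 p2 assume p1: "p1 \<in> {p \<in> perms n. avoids p (wrap sg)}" and p2: "p2 \<in> {p \<in> perms n. avoids p (wrap sg)}"
    and eq: "replace_gaps f p1 = replace_gaps f p2"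
  note props1 = replace_gaps_wrap_avoider[where p = p1, OF sg tg \<open>m \<ge> 1\<close> f]
  note props2 = replace_gaps_wrap_avoider[where p = p2, OF sg tg \<open>m \<ge> 1\<close> f]
  have len: "length p1 = n" "length p2 = n" using p1 p2 perms_length by auto
  have R: "records p1 = records p2" using props1(3) props2(3) p1 p2 eq by auto
  show "p1 = p2"
  proof (rule nth_equalityI)
    show "length p1 = length p2" using len by simp
    fix i assume i: "i < length p1"
    show "p1 ! i = p2 ! i"
    proof (cases "i \<in> records p1")
      case True
      then show ?thesis using eq R nth_replace_gaps_record by metis
    next
      case False
      have i2: "i < length p2" "i \<notin> records p2" using i len R False by auto
      have "gap p1 i \<in> consec_avoiders sg" "gap p2 i \<in> consec_avoiders sg"
        using gap_in_consec_avoiders[of p1 sg m i] gap_in_consec_avoiders[of p2 sg m i]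
          p1 p2 sg \<open>m \<ge> 1\<close> i i2 False unfolding perms_def avoids_def by auto
      moreover have "f (gap p1 i) = f (gap p2 i)"
        using props1(4)[OF _ _ i False] props2(4)[OF _ _ i2] p1 p2 eq by auto
      ultimately have "gap p1 i = gap p2 i" using inj by (simp add: inj_on_def)
      then show ?thesis using nth_gap[OF i False] nth_gap[OF i2] R by simp
    qed
  qed
qed

section \<open>Counting avoiders\<close>

lemma finite_distinct_lists_with_set:
  assumes "finite V"
  shows "finite {xs. distinct xs \<and> set xs = V}"
proof (rule finite_subset)
  show "{xs. distinct xs \<and> set xs = V} \<subseteq> {xs. set xs \<subseteq> V \<and> length xs = card V}"
    by (auto simp: distinct_card)
  show "finite {xs. set xs \<subseteq> V \<and> length xs = card V}"
    using finite_lists_length_eq[OF assms] .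
qed

lemma finite_perms: "finite (perms n)"
  using finite_distinct_lists_with_set[of "{1..n}"] unfolding perms_def by simp

lemma strict_mono_on_rank:
  fixes V :: "'a::linorder set"
  assumes "finite V"
  shows "strict_mono_on V (\<lambda>x. card {y \<in> V. y \<le> x})"
proof (rule strict_mono_onI)
  fix x y assume "x \<in> V" "y \<in> V" "x < y"
  then have "{z \<in> V. z \<le> x} \<subseteq> {z \<in> V. z \<le> y}" "y \<in> {z \<in> V. z \<le> y} - {z \<in> V. z \<le> x}"
    by auto
  then have "{z \<in> V. z \<le> x} \<subset> {z \<in> V. z \<le> y}" by blast
  then show "card {z \<in> V. z \<le> x} < card {z \<in> V. z \<le> y}"
    using assms by (simp add: psubset_card_mono)
qed

lemma rank_image:
  fixes V :: "'a::linorder set"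
  assumes V: "finite V"
  shows "(\<lambda>x. card {y \<in> V. y \<le> x}) ` V = {1..card V}"
proof -
  let ?rk = "\<lambda>x. card {y \<in> V. y \<le> x}"
  have "?rk ` V \<subseteq> {1..card V}"
  proof
    fix r assume "r \<in> ?rk ` V"
    then obtain x where "x \<in> V" "r = ?rk x" by blast
    moreover from this have "{y \<in> V. y \<le> x} \<noteq> {}" by blast
    ultimately show "r \<in> {1..card V}"
      using V by (auto simp: Suc_le_eq card_gt_0_iff intro: card_mono)
  qed
  moreover have "card (?rk ` V) = card V"
    using card_image[OF strict_mono_on_imp_inj_on[OF strict_mono_on_rank[OF V]]] .
  ultimately show ?thesis by (intro card_subset_eq) auto
qed

lemma card_consec_avoiders_with_set:
  assumes "finite V" "V \<noteq> {}"
  shows "card {xs \<in> consec_avoiders sg. set xs = V} = alpha (consec sg) (card V)"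
proof -
  let ?rk = "\<lambda>x. card {y \<in> V. y \<le> x}"
  let ?A = "{xs \<in> consec_avoiders sg. set xs = V}"
  let ?B = "{p \<in> perms (card V). avoids p (consec sg)}"
  have mono: "strict_mono_on V ?rk"
    using strict_mono_on_rank[OF assms(1)] .
  have bij: "bij_betw ?rk V {1..card V}"
    unfolding bij_betw_def using strict_mono_on_imp_inj_on[OF mono] rank_image[OF assms(1)] by blast
  define g where "g = the_inv_into V ?rk"
  have g: "bij_betw g {1..card V} V" "\<And>r. r \<in> {1..card V} \<Longrightarrow> ?rk (g r) = r"
    unfolding g_def using bij_betw_the_inv_into[OF bij] f_the_inv_into_f_bij_betw[OF bij] by auto
  have contains_rk: "contains (map ?rk xs) (consec sg) \<longleftrightarrow> contains xs (consec sg)" if "set xs = V" for xs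
    using contains_map_strict_mono[of xs ?rk] mono that by simp
  have "map ?rk ` ?A = ?B"
  proof
    show "map ?rk ` ?A \<subseteq> ?B"
      using bij_betw_imp_inj_on[OF bij] bij_betw_imp_surj_on[OF bij] contains_rk
      unfolding consec_avoiders_def perms_def avoids_def by (auto simp: distinct_map)
  next
    show "?B \<subseteq> map ?rk ` ?A"
    proof
      fix p assume p: "p \<in> ?B"
      then have set_p: "set p = {1..card V}" and "distinct p" unfolding perms_def by auto
      have p_eq: "map ?rk (map g p) = p"
        unfolding map_map using g(2) set_p by (intro map_idI) auto
      have "set (map g p) = V" using bij_betw_imp_surj_on[OF g(1)] set_p by simp
      moreover have "distinct (map g p)"
        using bij_betw_imp_inj_on[OF g(1)] set_p \<open>distinct p\<close> by (simp add: distinct_map)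
      moreover have "\<not> contains (map g p) (consec sg)"
        using p contains_rk[of "map g p"] p_eq \<open>set (map g p) = V\<close> unfolding avoids_def by simp
      ultimately have "map g p \<in> ?A" using assms(2) unfolding consec_avoiders_def by auto
      then show "p \<in> map ?rk ` ?A" using p_eq by (rule rev_image_eqI[OF _ sym])
    qed
  qed
  moreover have "inj_on (map ?rk) ?A"
  proof (rule inj_onI)
    fix xs ys assume "xs \<in> ?A" "ys \<in> ?A" "map ?rk xs = map ?rk ys"
    then show "xs = ys" using inj_on_map_eq_map[of ?rk xs ys] bij_betw_imp_inj_on[OF bij] by simp
  qed
  ultimately have "card ?A = card ?B" using card_image by fastforce
  then show ?thesis using assms unfolding alpha_def by simp
qed

lemma ex_consec_avoider_injection:
  assumes "\<And>n. alpha (consec sg) n \<le> alpha (consec tg) n"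
  shows "\<exists>f. (\<forall>xs\<in>consec_avoiders sg. f xs \<in> consec_avoiders tg \<and> set (f xs) = set xs) \<and>
    inj_on f (consec_avoiders sg)"
proof -
  let ?A = "\<lambda>sg V. {xs \<in> consec_avoiders sg. set xs = V}"
  \<comment> \<open>the injection keeps value sets, so it is glued from one injection per value set\<close>
  have ex: "\<exists>g. g ` ?A sg V \<subseteq> ?A tg V \<and> inj_on g (?A sg V)" for V
  proof (cases "finite V \<and> V \<noteq> {}")
    case True
    have "finite (?A sg' V)" for sg'
    proof -
      have "?A sg' V \<subseteq> {xs. distinct xs \<and> set xs = V}" unfolding consec_avoiders_def by auto
      moreover have "finite {xs. distinct xs \<and> set xs = V}"
        using finite_distinct_lists_with_set True by blast
      ultimately show ?thesis by (rule finite_subset)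
    qed
    moreover have "card (?A sg V) \<le> card (?A tg V)"
      using card_consec_avoiders_with_set True assms by simp
    ultimately show ?thesis by (intro card_le_inj)
  next
    case False
    then have "?A sg V = {}" unfolding consec_avoiders_def by auto
    then show ?thesis by blast
  qed
  obtain g where g: "\<And>V. g V ` ?A sg V \<subseteq> ?A tg V" "\<And>V. inj_on (g V) (?A sg V)"
    using choice[of "\<lambda>V g. g ` ?A sg V \<subseteq> ?A tg V \<and> inj_on g (?A sg V)"] ex by blast
  have maps: "g (set xs) xs \<in> consec_avoiders tg \<and> set (g (set xs) xs) = set xs"
    if "xs \<in> consec_avoiders sg" for xs
    using g(1)[of "set xs"] that by blast
  have "inj_on (\<lambda>xs. g (set xs) xs) (consec_avoiders sg)"
  proof (rule inj_onI)
    fix xs ys assume xs: "xs \<in> consec_avoiders sg" and ys: "ys \<in> consec_avoiders sg"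
      and eq: "g (set xs) xs = g (set ys) ys"
    then have "set xs = set ys" using maps by metis
    then show "xs = ys" using g(2)[of "set xs"] xs ys eq by (auto dest: inj_onD)
  qed
  with maps show ?thesis by (intro exI[of _ "\<lambda>xs. g (set xs) xs"]) simp
qed

lemma alpha_wrap_mono:
  assumes "sg \<in> perms m" "tg \<in> perms m" "m \<ge> 1"
    and "\<And>n. alpha (consec sg) n \<le> alpha (consec tg) n"
  shows "alpha (wrap sg) n \<le> alpha (wrap tg) n"
proof -
  obtain f where f: "\<forall>xs\<in>consec_avoiders sg. f xs \<in> consec_avoiders tg \<and> set (f xs) = set xs"
    and inj: "inj_on f (consec_avoiders sg)"
    using ex_consec_avoider_injection[OF assms(4)] by blast
  have "replace_gaps f ` {p \<in> perms n. avoids p (wrap sg)} \<subseteq> {p \<in> perms n. avoids p (wrap tg)}"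
    using replace_gaps_wrap_avoider(1,2)[OF assms(1-3) f] by blast
  with inj_on_replace_gaps[OF assms(1-3) f inj]
  have "card {p \<in> perms n. avoids p (wrap sg)} \<le> card {p \<in> perms n. avoids p (wrap tg)}"
    by (rule card_inj_on_le) (simp add: finite_perms)
  then show ?thesis unfolding alpha_def by simp
qed

lemma egf_eq_iff: "egf P = egf Q \<longleftrightarrow> alpha P = alpha Q"
  unfolding egf_def fps_eq_iff by (auto simp: fun_eq_iff)

lemma egf_wrap_eq:
  assumes "sg \<in> perms m" "tg \<in> perms m" "m \<ge> 1" "egf (consec sg) = egf (consec tg)"
  shows "egf (wrap sg) = egf (wrap tg)"
  using alpha_wrap_mono[OF assms(1-3)] alpha_wrap_mono[OF assms(2,1,3)] assms(4)
  unfolding egf_eq_iff by (simp add: fun_eq_iff le_antisym)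

section \<open>Reversal and the main theorem\<close>

lemma same_order_rev: "same_order (rev xs) (rev ys) \<longleftrightarrow> same_order xs ys"
proof -
  have rev_rev: "same_order (rev xs) (rev ys)" if "same_order xs ys" for xs ys :: "nat list"
  proof -
    have "(rev xs ! a < rev xs ! b) = (rev ys ! a < rev ys ! b)"
      if "a < length xs" "b < length xs" for a b
      using \<open>same_order xs ys\<close> that unfolding same_order_def by (simp add: rev_nth)
    then show ?thesis using \<open>same_order xs ys\<close> unfolding same_order_def by simp
  qed
  show ?thesis using rev_rev[of xs ys] rev_rev[of "rev xs" "rev ys"] by auto
qed

lemma window_rev:
  assumes "i + m \<le> length p"
  shows "map (nth (rev p)) [i..<i + m] = rev (map (nth p) [length p - m - i..<length p - m - i + m])"
  using assms by (intro nth_equalityI) (auto simp: rev_nth)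

lemma occurs_at_rev:
  assumes "i + length sg \<le> length p"
  shows "occurs_at (rev p) (rev sg) i \<longleftrightarrow> occurs_at p sg (length p - length sg - i)"
  using assms window_rev[OF assms] same_order_rev unfolding occurs_at_def by simp

lemma contains_consec_rev: "contains (rev p) (consec (rev sg)) \<longleftrightarrow> contains p (consec sg)"
proof (cases "sg = []")
  case True
  then show ?thesis unfolding consec_def contains_def by simp
next
  case False
  have "(\<exists>i. occurs_at (rev p) (rev sg) i) \<longleftrightarrow> (\<exists>j. occurs_at p sg j)"
  proof
    assume "\<exists>i. occurs_at (rev p) (rev sg) i"
    then obtain i where "occurs_at (rev p) (rev sg) i" ..
    moreover from this have "i + length sg \<le> length p" unfolding occurs_at_def by simp
    ultimately show "\<exists>j. occurs_at p sg j" using occurs_at_rev by blast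
  next
    assume "\<exists>j. occurs_at p sg j"
    then obtain j where j: "occurs_at p sg j" ..
    then have "j + length sg \<le> length p" unfolding occurs_at_def by simp
    then have "occurs_at (rev p) (rev sg) (length p - length sg - j)"
      using occurs_at_rev[of "length p - length sg - j" sg p] j by simp
    then show "\<exists>i. occurs_at (rev p) (rev sg) i" ..
  qed
  then show ?thesis using contains_consec_iff False by simp
qed

lemma alpha_consec_rev: "alpha (consec (rev sg)) n = alpha (consec sg) n"
proof -
  let ?A = "{p \<in> perms n. avoids p (consec sg)}"
  let ?B = "{p \<in> perms n. avoids p (consec (rev sg))}"
  have rev_mem: "rev p \<in> ?A \<longleftrightarrow> p \<in> ?B" for p
    using contains_consec_rev[of "rev p" sg] unfolding perms_def avoids_def by auto
  have "rev ` ?A = ?B"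
  proof (intro set_eqI iffI)
    fix p assume "p \<in> rev ` ?A"
    then obtain x where "x \<in> ?A" "p = rev x" by blast
    then show "p \<in> ?B" using rev_mem[of p] by simp
  next
    fix p assume "p \<in> ?B"
    then have "rev p \<in> ?A" using rev_mem by blast
    then show "p \<in> rev ` ?A" by (rule image_eqI[where f = rev, OF rev_rev_ident[symmetric]])
  qed
  moreover have "card (rev ` ?A) = card ?A"
    by (rule card_image) (simp add: inj_on_def)
  ultimately show ?thesis unfolding alpha_def by simp
qed

theorem mainTheorem14:
  shows "(\<forall>(k::nat) \<sigma> \<tau>. k \<ge> 3 \<longrightarrow> \<sigma> \<in> perms (k - 2) \<longrightarrow> \<tau> \<in> perms (k - 2) \<longrightarrow>
            egf (consec \<sigma>) = egf (consec \<tau>) \<longrightarrow> egf (wrap \<sigma>) = egf (wrap \<tau>))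
         \<and> egf ([1,2,3,4], [True,False,True]) = egf ([1,3,2,4], [True,False,True])"
proof
  show "\<forall>(k::nat) \<sigma> \<tau>. k \<ge> 3 \<longrightarrow> \<sigma> \<in> perms (k - 2) \<longrightarrow> \<tau> \<in> perms (k - 2) \<longrightarrow>
            egf (consec \<sigma>) = egf (consec \<tau>) \<longrightarrow> egf (wrap \<sigma>) = egf (wrap \<tau>)"
  proof (intro allI impI)
    fix k :: nat and \<sigma> \<tau>
    assume "k \<ge> 3" "\<sigma> \<in> perms (k - 2)" "\<tau> \<in> perms (k - 2)" "egf (consec \<sigma>) = egf (consec \<tau>)"
    then show "egf (wrap \<sigma>) = egf (wrap \<tau>)" using egf_wrap_eq[of \<sigma> "k - 2" \<tau>] by simp
  qed
  have "[1, 2] \<in> perms 2" "[2, 1] \<in> perms 2" unfolding perms_def by auto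
  moreover have "egf (consec [1, 2]) = egf (consec [2, 1])"
    using alpha_consec_rev[of "[1, 2]"] unfolding egf_eq_iff by (simp add: fun_eq_iff)
  ultimately have "egf (wrap [1, 2]) = egf (wrap [2, 1])"
    using egf_wrap_eq[of "[1, 2]" 2 "[2, 1]"] by simp
  moreover have "wrap [1, 2] = ([1,2,3,4], [True,False,True])" "wrap [2, 1] = ([1,3,2,4], [True,False,True])"
    unfolding wrap_def by simp_all
  ultimately show "egf ([1,2,3,4], [True,False,True]) = egf ([1,3,2,4], [True,False,True])"
    by simp
qed

end
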